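(* Let $L$ be a co-Heyting algebra and let $(a_n)_{n<\omega},(b_n)_{n<\omega},(c_n)_{n<\omega}$ be sequences in $L$ with $c_n\le b_n\le a_n$ for every $n$. If $(a_n)$ and $(c_n)$ both converge to the same $l\in L$ for the codimetric pseudometric, then $(b_n)$ converges to $l$.
   Context: A co-Heyting algebra is a bounded distributive lattice $(L,0,1,\vee,\wedge)$ such that $a-b=\min\{c\in L: a\le b\vee c\}$ exists for all $a,b$. Let $a\triangle b=(a-b)\vee(b-a)$. $\operatorname{Spec}L$ is the set of prime filters ordered by inclusion; height = foundation rank there; $\operatorname{codim}_La=\min\{\operatorname{height}\mathfrak p: a\in\mathfrak p\}$ ($+\infty$ if none). The codimetric pseudometric is $\operatorname{dist}_L(a,b)=2^{-\operatorname{codim}_L(a\triangle b)}$ if finite and $0$ otherwise; $(x_n)$ converges to $y$ iff $\operatorname{dist}_L(x_n,y)\to0$. *)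

theory Defs
  imports Complex_Main "HOL-Library.Extended_Nat"
begin

definition coheyting :: "'a::{bounded_lattice, distrib_lattice} itself \<Rightarrow> bool" where
  "coheyting _ \<longleftrightarrow> (\<forall>a b::'a. \<exists>c. a \<le> sup b c \<and> (\<forall>d. a \<le> sup b d \<longrightarrow> c \<le> d))"

definition codiff :: "'a::{bounded_lattice, distrib_lattice} \<Rightarrow> 'a \<Rightarrow> 'a" where
  "codiff a b = (THE c. a \<le> sup b c \<and> (\<forall>d. a \<le> sup b d \<longrightarrow> c \<le> d))"

definition symdiff :: "'a::{bounded_lattice, distrib_lattice} \<Rightarrow> 'a \<Rightarrow> 'a" where
  "symdiff a b = sup (codiff a b) (codiff b a)"

definition prime_filter :: "'a::{bounded_lattice, distrib_lattice} set \<Rightarrow> bool" where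
  "prime_filter F \<longleftrightarrow> top \<in> F \<and> bot \<notin> F
     \<and> (\<forall>x y. x \<in> F \<longrightarrow> x \<le> y \<longrightarrow> y \<in> F)
     \<and> (\<forall>x y. x \<in> F \<longrightarrow> y \<in> F \<longrightarrow> inf x y \<in> F)
     \<and> (\<forall>x y. sup x y \<in> F \<longrightarrow> x \<in> F \<or> y \<in> F)"

text \<open>Foundation rank in Spec L (ordered by inclusion), finite values:
  rank_le n p  iff  the foundation rank of p is at most n.\<close>
fun rank_le :: "nat \<Rightarrow> 'a::{bounded_lattice, distrib_lattice} set \<Rightarrow> bool" where
  "rank_le 0 p = (\<forall>q. prime_filter q \<longrightarrow> \<not> q \<subset> p)"
| "rank_le (Suc n) p = (\<forall>q. prime_filter q \<longrightarrow> q \<subset> p \<longrightarrow> rank_le n q)"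

text \<open>Height; \<infinity> encodes "not a finite ordinal" (infinite rank or ill-founded).\<close>
definition height :: "'a::{bounded_lattice, distrib_lattice} set \<Rightarrow> enat" where
  "height p = (INF n \<in> {n. rank_le n p}. enat n)"

definition codim :: "'a::{bounded_lattice, distrib_lattice} \<Rightarrow> enat" where
  "codim a = (INF p \<in> {p. prime_filter p \<and> a \<in> p}. height p)"

definition codist :: "'a::{bounded_lattice, distrib_lattice} \<Rightarrow> 'a \<Rightarrow> real" where
  "codist a b = (case codim (symdiff a b) of enat n \<Rightarrow> (1/2) ^ n | \<infinity> \<Rightarrow> 0)"

definition coconverges :: "(nat \<Rightarrow> 'a::{bounded_lattice, distrib_lattice}) \<Rightarrow> 'a \<Rightarrow> bool" where
  "coconverges x y \<longleftrightarrow> ((\<lambda>n. codist (x n) y) \<longlonglongrightarrow> 0)"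

end

theory Submission
  imports Defs
begin

text \<open>Since \<open>-\<close> is monotone in its first argument and antitone in its second,
  \<open>c \<le> b \<le> a\<close> gives \<open>b \<triangle> l \<le> (a \<triangle> l) \<squnion> (c \<triangle> l)\<close>. A prime filter containing a join
  contains one of the joinands, so \<open>codim\<close> of the join is at least the minimum of the
  two codimensions; hence \<open>dist(b\<^sub>n, l) \<le> max (dist(a\<^sub>n, l)) (dist(c\<^sub>n, l))\<close>, and the
  claim follows by squeezing.\<close>

lemma codiff_spec:
  fixes a b :: "'a::{bounded_lattice, distrib_lattice}"
  assumes "coheyting TYPE('a)"
  shows "a \<le> sup b (codiff a b)"
    and "a \<le> sup b d \<Longrightarrow> codiff a b \<le> d"
proof -
  from assms obtain c where c: "a \<le> sup b c" "\<forall>d. a \<le> sup b d \<longrightarrow> c \<le> d"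
    unfolding coheyting_def by blast
  have "a \<le> sup b (codiff a b) \<and> (\<forall>d. a \<le> sup b d \<longrightarrow> codiff a b \<le> d)"
    unfolding codiff_def by (rule theI2[where a = c]) (use c in \<open>auto intro: antisym\<close>)
  then show "a \<le> sup b (codiff a b)" and "a \<le> sup b d \<Longrightarrow> codiff a b \<le> d"
    by auto
qed

lemma codiff_mono_left:
  fixes a b l :: "'a::{bounded_lattice, distrib_lattice}"
  assumes "coheyting TYPE('a)" and "b \<le> a"
  shows "codiff b l \<le> codiff a l"
  using assms(2) codiff_spec[OF assms(1), of a l] codiff_spec(2)[OF assms(1), of b l]
  by (meson order_trans)

lemma codiff_antimono_right:
  fixes b c l :: "'a::{bounded_lattice, distrib_lattice}"
  assumes "coheyting TYPE('a)" and "c \<le> b"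
  shows "codiff l b \<le> codiff l c"
proof -
  have "l \<le> sup c (codiff l c)" by (rule codiff_spec(1)[OF assms(1)])
  also have "\<dots> \<le> sup b (codiff l c)" using assms(2) by (rule sup_mono) simp
  finally show ?thesis by (rule codiff_spec(2)[OF assms(1)])
qed

lemma symdiff_between_le:
  fixes a b c l :: "'a::{bounded_lattice, distrib_lattice}"
  assumes "coheyting TYPE('a)" and "c \<le> b" and "b \<le> a"
  shows "symdiff b l \<le> sup (symdiff a l) (symdiff c l)"
  using codiff_mono_left[OF assms(1,3), of l] codiff_antimono_right[OF assms(1,2), of l]
  unfolding symdiff_def by (rule le_supI[OF le_supI1[OF le_supI1] le_supI2[OF le_supI2]])

lemma codim_antimono:
  fixes x y :: "'a::{bounded_lattice, distrib_lattice}"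
  assumes "x \<le> y"
  shows "codim y \<le> codim x"
  unfolding codim_def
  by (rule INF_superset_mono) (auto simp: prime_filter_def intro: assms)

lemma codim_sup_ge_min:
  fixes x y :: "'a::{bounded_lattice, distrib_lattice}"
  shows "min (codim x) (codim y) \<le> codim (sup x y)"
  unfolding codim_def
proof (rule INF_greatest)
  fix p assume p: "p \<in> {p. prime_filter p \<and> sup x y \<in> p}"
  then have "x \<in> p \<or> y \<in> p" by (auto simp: prime_filter_def)
  then show "min (INF p \<in> {p. prime_filter p \<and> x \<in> p}. height p)
                 (INF p \<in> {p. prime_filter p \<and> y \<in> p}. height p) \<le> height p"
  proof
    assume "x \<in> p"
    with p show ?thesis by (intro min.coboundedI1 INF_lower) auto
  next
    assume "y \<in> p"
    with p show ?thesis by (intro min.coboundedI2 INF_lower) auto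
  qed
qed

definition half_pow :: "enat \<Rightarrow> real" where
  "half_pow e = (case e of enat n \<Rightarrow> (1/2) ^ n | \<infinity> \<Rightarrow> 0)"

lemma codist_eq_half_pow: "codist x y = half_pow (codim (symdiff x y))"
  by (simp add: codist_def half_pow_def)

lemma half_pow_nonneg: "0 \<le> half_pow e"
  by (cases e) (auto simp: half_pow_def)

lemma half_pow_antimono: "e \<le> e' \<Longrightarrow> half_pow e' \<le> half_pow e"
  by (cases e; cases e') (auto simp: half_pow_def power_decreasing)

lemma half_pow_min: "half_pow (min e e') = max (half_pow e) (half_pow e')"
  by (cases e e' rule: linorder_le_cases)
     (auto simp: min_def max_def dest: half_pow_antimono)

lemma codist_le_max_if_symdiff_le:
  fixes a b c l :: "'a::{bounded_lattice, distrib_lattice}"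
  assumes "symdiff b l \<le> sup (symdiff a l) (symdiff c l)"
  shows "codist b l \<le> max (codist a l) (codist c l)"
proof -
  have "min (codim (symdiff a l)) (codim (symdiff c l)) \<le> codim (symdiff b l)"
    using codim_sup_ge_min codim_antimono[OF assms] by (rule order_trans)
  then show ?thesis
    unfolding codist_eq_half_pow half_pow_min[symmetric] by (rule half_pow_antimono)
qed

theorem theorem7p6:
  fixes a b c :: "nat \<Rightarrow> 'a::{bounded_lattice, distrib_lattice}" and l :: 'a
  assumes "coheyting TYPE('a)"
    and "\<And>n. c n \<le> b n" and "\<And>n. b n \<le> a n"
    and "coconverges a l" and "coconverges c l"
  shows "coconverges b l"
proof -
  have bound: "codist (b n) l \<le> max (codist (a n) l) (codist (c n) l)" for n
    using symdiff_between_le[OF assms(1-3)] by (rule codist_le_max_if_symdiff_le)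
  have max_lim: "(\<lambda>n. max (codist (a n) l) (codist (c n) l)) \<longlonglongrightarrow> max 0 0"
    using assms(4,5) unfolding coconverges_def by (rule tendsto_max)
  show ?thesis
    unfolding coconverges_def
  proof (rule real_tendsto_sandwich[where f = "\<lambda>_. 0"])
    show "\<forall>\<^sub>F n in sequentially. 0 \<le> codist (b n) l"
      by (simp add: codist_eq_half_pow half_pow_nonneg)
    show "\<forall>\<^sub>F n in sequentially. codist (b n) l \<le> max (codist (a n) l) (codist (c n) l)"
      by (simp add: bound)
  qed (use max_lim in simp_all)
qed

end
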